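(* Let $T_r$ be a resistive dyadic tree whose resistances satisfy $r_n^i\le\alpha^n$ for all $n\ge1$, $0\le i\le 2^n-1$, for some $\alpha\in(1,2)$. Then for every $p\in H^1(T_r)$ the sequence $\tilde p_n$ converges in $L^2(\mathbb{Z}_2)$ to a limit $\gamma_0(p)$, and $\gamma_0$ maps $H^1(T_r)$ continuously into $H^{s_\alpha}(\mathbb{Z}_2)$, where $s_\alpha=(1-\log_2\alpha)/2$: $\gamma_0(p)\in H^{s_\alpha}(\mathbb{Z}_2)$ and $\|\gamma_0(p)\|_{H^{s_\alpha}(\mathbb{Z}_2)}\le C\|p\|_{H^1(T_r)}$ with $C$ independent of $p$.
   Context: The infinite dyadic tree $T$ has vertex set $V$ equal to the disjoint union over $n\ge 0$ of the sets $\mathbb{Z}/2^n\mathbb{Z}$; $x_n^k$ denotes $k\in\mathbb{Z}/2^n\mathbb{Z}$, and $x_0^0$ is the root. For $n<m$, $\varphi_n^m:\mathbb{Z}/2^m\mathbb{Z}\to\mathbb{Z}/2^n\mathbb{Z}$ is the canonical surjection. For $n\ge1$ the edge $e_n^k$ joins $x_n^k$ to $\varphi_{n-1}^n(x_n^k)$. A resistive dyadic tree $T_r$ is $T$ with positive resistances $r_n^k$ on $e_n^k$. $|p|_{H^1}^2=\sum_{n\ge1}\sum_k |p(x_n^k)-p(\varphi_{n-1}^n(x_n^k))|^2/r_n^k$, $H^1(T_r)=\{p:V\to\mathbb{R}:|p|_{H^1}<\infty\}$ with norm $\|p\|_{H^1(T_r)}^2=|p(x_0^0)|^2+|p|_{H^1}^2$.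 $\mathbb{Z}_2$: 2-adic integers, $|\cdot|_2$ the 2-adic absolute value, $\mu$ the Haar probability measure on $\mathbb{Z}_2$. For $n\ge0$, $\tilde p_n(x)=p(x_n^a)$ where $a\in\{0,\dots,2^n-1\}$, $x\in a+2^n\mathbb{Z}_2$. $\Lambda=\mathbb{Q}_2/\mathbb{Z}_2$; $\mathcal F(f)(\lambda)=\int_{\mathbb{Z}_2}e^{-2i\pi\lambda x}f(x)\,d\mu(x)$; $H^s(\mathbb{Z}_2)$ is the completion of the locally constant functions on $\mathbb{Z}_2$ for the norm $\|f\|_{H^s(\mathbb{Z}_2)}=\big(\sum_{\lambda\in\Lambda}(1+|\lambda|_2)^{2s}|\mathcal F(f)(\lambda)|^2\big)^{1/2}$. *)

theory Defs
  imports "HOL-Probability.Probability"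
begin

text \<open>The 2-adic integers are modelled by their binary digit sequences:
  x :: nat \<Rightarrow> bool represents the 2-adic integer sum_i (if x i then 2^i else 0).
  The Haar probability measure on Z_2 corresponds to the product of fair coin flips.\<close>

type_synonym Z2 = "nat \<Rightarrow> bool"

definition haar :: "Z2 measure" where
  "haar = PiM UNIV (\<lambda>_::nat. measure_pmf (bernoulli_pmf (1/2)))"

definition res :: "nat \<Rightarrow> Z2 \<Rightarrow> nat" where
  "res n x = (\<Sum>i<n. if x i then 2^i else 0)"

text \<open>Vertices x_n^k of the dyadic tree are pairs (n,k) with k < 2^n;
  functions on vertices are p :: nat \<Rightarrow> nat \<Rightarrow> real (values with k \<ge> 2^n are irrelevant).
  The parent of x_n^k is x_(n-1)^(k mod 2^(n-1)).\<close>

definition H1_semi_sq :: "(nat \<Rightarrow> nat \<Rightarrow> real) \<Rightarrow> (nat \<Rightarrow> nat \<Rightarrow> real) \<Rightarrow> nat \<Rightarrow> real" where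
  "H1_semi_sq r p n = (\<Sum>k<2^(Suc n). (p (Suc n) k - p n (k mod 2^n))^2 / r (Suc n) k)"

definition in_H1 :: "(nat \<Rightarrow> nat \<Rightarrow> real) \<Rightarrow> (nat \<Rightarrow> nat \<Rightarrow> real) \<Rightarrow> bool" where
  "in_H1 r p \<longleftrightarrow> summable (H1_semi_sq r p)"

definition H1_norm :: "(nat \<Rightarrow> nat \<Rightarrow> real) \<Rightarrow> (nat \<Rightarrow> nat \<Rightarrow> real) \<Rightarrow> real" where
  "H1_norm r p = sqrt ((p 0 0)^2 + (\<Sum>n. H1_semi_sq r p n))"

definition ptilde :: "(nat \<Rightarrow> nat \<Rightarrow> real) \<Rightarrow> nat \<Rightarrow> Z2 \<Rightarrow> real" where
  "ptilde p n x = p n (res n x)"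

definition in_L2 :: "(Z2 \<Rightarrow> real) \<Rightarrow> bool" where
  "in_L2 f \<longleftrightarrow> f \<in> borel_measurable haar \<and> integrable haar (\<lambda>x. (f x)^2)"

text \<open>Lambda = Q_2/Z_2, represented by the dyadic rationals in [0,1).\<close>
definition Lambda :: "rat set" where
  "Lambda = {q. 0 \<le> q \<and> q < 1 \<and> (\<exists>m::nat. q * 2^m \<in> \<int>)}"

definition dyad_ord :: "rat \<Rightarrow> nat" where
  "dyad_ord q = (LEAST m. q * 2^m \<in> \<int>)"

definition abs2 :: "rat \<Rightarrow> real" where
  "abs2 q = (if q = 0 then 0 else 2 ^ dyad_ord q)"

text \<open>The character x \<mapsto> exp(-2 i pi lambda x), well defined since lambda * 2^m \<in> Z.\<close>
definition chr :: "rat \<Rightarrow> Z2 \<Rightarrow> complex" where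
  "chr q x = cis (- 2 * pi * (real_of_rat q * real (res (dyad_ord q) x)))"

definition fourier :: "(Z2 \<Rightarrow> real) \<Rightarrow> rat \<Rightarrow> complex" where
  "fourier f q = (LINT x|haar. chr q x * complex_of_real (f x))"

text \<open>H^s(Z_2): the completion of locally constant functions for the Fourier-weighted norm,
  realised inside L^2(Z_2) (the weights are \<ge> 1, so the completion embeds in L^2).\<close>
definition Hs_weight :: "real \<Rightarrow> (Z2 \<Rightarrow> real) \<Rightarrow> rat \<Rightarrow> real" where
  "Hs_weight t f q = (1 + abs2 q) powr (2*t) * (cmod (fourier f q))^2"

definition in_Hs :: "real \<Rightarrow> (Z2 \<Rightarrow> real) \<Rightarrow> bool" where
  "in_Hs t f \<longleftrightarrow> in_L2 f \<and> Hs_weight t f summable_on Lambda"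

definition Hs_norm :: "real \<Rightarrow> (Z2 \<Rightarrow> real) \<Rightarrow> real" where
  "Hs_norm t f = sqrt (infsum (Hs_weight t f) Lambda)"

end

theory Submission
  imports Defs
begin

text \<open>
  The increment \<open>ptilde p (n+1) - ptilde p n\<close> depends only on the first \<open>n+1\<close> binary digits,
  and since the resistances on level \<open>n+1\<close> are at most \<open>\<alpha>^(n+1)\<close>, its squared \<open>L\<^sup>2\<close> norm is
  at most \<open>\<rho>^(n+1)\<close> times the energy of \<open>p\<close> on that level, where \<open>\<rho> = \<alpha>/2 < 1\<close>. Weighting the
  increments by \<open>\<sigma>^(n+1)\<close> with \<open>\<sigma> = sqrt \<rho>\<close>, Cauchy-Schwarz shows that the telescoping series
  converges almost everywhere; its sum \<open>\<gamma>\<^sub>0(p)\<close> (called \<open>trace\<close> below) lies at squared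
  \<open>L\<^sup>2\<close> distance at most \<open>\<rho>^(n+1) T\<^sub>n / (1 - \<sigma>)\<close> from \<open>ptilde p n\<close>, where the tail energies
  \<open>T\<^sub>n\<close> have sum at most the total energy over \<open>1 - \<sigma>\<close>.

  A character of exact order \<open>2^(n+1)\<close> is orthogonal to every function of the first \<open>n\<close> digits,
  so by Bessel's inequality the Fourier mass of \<open>\<gamma>\<^sub>0(p)\<close> on these characters is at most that
  distance. The Sobolev weight there is at most \<open>(1/\<rho>)^(n+2)\<close>, because
  \<open>2^(1 - log\<^sub>2 \<alpha>) = 1/\<rho>\<close>, so level \<open>n+1\<close> contributes at most \<open>T\<^sub>n / (\<rho> (1 - \<sigma>))\<close>, and
  summing over the levels gives the \<open>H\<^sup>s\<close> bound.
\<close>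

section \<open>Haar measure and cylinder functions\<close>

interpretation coins: product_prob_space "\<lambda>_::nat. measure_pmf (bernoulli_pmf (1/2))" UNIV
  by (auto simp: product_prob_space_def product_prob_space_axioms_def product_sigma_finite_def
      prob_space_measure_pmf prob_space_imp_sigma_finite)

interpretation haar: prob_space haar
  unfolding haar_def by (rule coins.P.prob_space_axioms)

lemma space_haar [simp]: "space haar = UNIV"
  by (simp add: haar_def space_PiM)

lemma res_0 [simp]: "res 0 x = 0"
  by (simp add: res_def)

lemma res_Suc: "res (Suc n) x = res n x + (if x n then 2^n else 0)"
  by (simp add: res_def)

lemma res_less: "res n x < 2^n"
  by (induction n) (auto simp: res_Suc)

lemma res_eq_horner_sum: "res n x = horner_sum of_bool 2 (map x [0..<n])"
  by (simp add: res_def horner_sum_eq_sum lessThan_atLeast0 sum.inter_restrict if_distrib)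

lemma res_mod_power:
  assumes "m \<le> M"
  shows "res m x = res M x mod 2^m"
proof -
  have "take_bit m (res M x) = horner_sum of_bool 2 (take m (map x [0..<M]))"
    by (simp add: res_eq_horner_sum take_bit_horner_sum_bit_eq)
  also have "take m (map x [0..<M]) = map x [0..<m]"
    using assms by (simp add: take_map)
  finally show ?thesis
    by (simp add: res_eq_horner_sum take_bit_eq_mod)
qed

lemma res_eq_iff_bits:
  assumes "k < 2^n"
  shows "res n x = k \<longleftrightarrow> (\<forall>i<n. x i = bit k i)"
proof
  assume "res n x = k"
  then show "\<forall>i<n. x i = bit k i"
    by (auto simp: res_eq_horner_sum bit_horner_sum_bit_iff)
next
  assume "\<forall>i<n. x i = bit k i"
  then have "res n x = horner_sum of_bool 2 (map (bit k) [0..<n])"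
    unfolding res_eq_horner_sum by (intro arg_cong[where f = "horner_sum of_bool 2"] map_cong) auto
  then show "res n x = k"
    using assms by (simp add: horner_sum_bit_eq_take_bit take_bit_nat_eq_self)
qed

lemma res_fiber_eq_prod_emb:
  assumes "k < 2^n"
  shows "{x. res n x = k} = prod_emb UNIV (\<lambda>_. measure_pmf (bernoulli_pmf (1/2))) {..<n}
           (PiE {..<n} (\<lambda>i. {bit k i}))"
proof (rule set_eqI)
  fix x :: "nat \<Rightarrow> bool"
  have "x \<in> prod_emb UNIV (\<lambda>_. measure_pmf (bernoulli_pmf (1/2))) {..<n} (PiE {..<n} (\<lambda>i. {bit k i}))
      \<longleftrightarrow> (\<forall>i<n. x i = bit k i)"
    by (auto simp: prod_emb_iff PiE_iff)
  then show "x \<in> {x. res n x = k} \<longleftrightarrow> x \<in> prod_emb UNIV (\<lambda>_. measure_pmf (bernoulli_pmf (1/2))) {..<n}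
           (PiE {..<n} (\<lambda>i. {bit k i}))"
    using res_eq_iff_bits[OF assms] by simp
qed

lemma emeasure_res_fiber:
  assumes "k < 2^n"
  shows "emeasure haar {x. res n x = k} = ennreal (1 / 2^n)"
proof -
  have "emeasure haar {x. res n x = k} =
      (\<Prod>i<n. emeasure (measure_pmf (bernoulli_pmf (1/2))) {bit k i})"
    unfolding res_fiber_eq_prod_emb[OF assms] haar_def by (rule coins.emeasure_PiM_emb) auto
  also have "\<dots> = ennreal (1/2) ^ n"
    by (simp add: emeasure_pmf_single)
  also have "\<dots> = ennreal ((1/2) ^ n)"
    by (rule ennreal_power) simp
  also have "\<dots> = ennreal (1 / 2^n)"
    by (simp only: power_one_over)
  finally show ?thesis .
qed

lemma sets_res_fiber [measurable]: "{x. res n x = k} \<in> sets haar"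
proof (cases "k < 2^n")
  case True
  show ?thesis
    unfolding res_fiber_eq_prod_emb[OF True] haar_def by (rule sets_PiM_I) auto
next
  case False
  then have "{x. res n x = k} = {}"
    using res_less[of n] by (auto simp: not_less dest: leD)
  then show ?thesis by simp
qed

lemma measurable_res [measurable]: "res n \<in> measurable haar (count_space UNIV)"
proof (subst measurable_count_space_eq2_countable, intro conjI ballI)
  show "res n -` {k} \<inter> space haar \<in> sets haar" for k
    using sets_res_fiber[of n k] by (simp add: vimage_def)
qed simp

lemma cylinder_eq_sum_indicator:
  fixes F :: "nat \<Rightarrow> 'a::real_vector"
  shows "F (res n x) = (\<Sum>k<2^n. indicator {y. res n y = k} x *\<^sub>R F k)"
proof -
  have "(\<Sum>k<2^n. indicator {y. res n y = k} x *\<^sub>R F k) = (\<Sum>k<2^n. if k = res n x then F k else 0)"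
    by (intro sum.cong) (auto simp: indicator_def)
  then show ?thesis
    using res_less[of n x] by simp
qed

lemma
  fixes F :: "nat \<Rightarrow> 'a::{banach, second_countable_topology}"
  shows integrable_cylinder [simp, intro]: "integrable haar (\<lambda>x. F (res n x))"
    and integral_cylinder: "(\<integral>x. F (res n x) \<partial>haar) = (1 / 2^n) *\<^sub>R (\<Sum>k<2^n. F k)"
proof -
  have ind: "integrable haar (\<lambda>x. indicator {y. res n y = k} x *\<^sub>R F k)" for k
    by (intro integrable_scaleR_left integrable_real_indicator) (simp_all add: less_top[symmetric])
  show "integrable haar (\<lambda>x. F (res n x))"
    by (subst cylinder_eq_sum_indicator) (intro Bochner_Integration.integrable_sum ind)
  have "(\<integral>x. F (res n x) \<partial>haar) = (\<Sum>k<2^n. (1 / 2^n) *\<^sub>R F k)"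
    by (subst cylinder_eq_sum_indicator, subst Bochner_Integration.integral_sum)
      (auto intro: ind simp: measure_def emeasure_res_fiber)
  then show "(\<integral>x. F (res n x) \<partial>haar) = (1 / 2^n) *\<^sub>R (\<Sum>k<2^n. F k)"
    by (simp add: scaleR_sum_right)
qed

section \<open>Characters of the 2-adic integers\<close>

lemma of_rat_in_Ints_iff: "(of_rat q :: 'a::field_char_0) \<in> \<int> \<longleftrightarrow> q \<in> \<int>"
proof
  assume "of_rat q \<in> (\<int> :: 'a set)"
  then obtain j where "(of_rat q :: 'a) = of_rat (of_int j)"
    by (auto elim: Ints_cases)
  then have "q = of_int j"
    by (simp only: of_rat_eq_iff)
  then show "q \<in> \<int>"
    by simp
qed (auto elim: Ints_cases)

lemma Ints_mult_power_mono:
  fixes \<theta> :: "'a::ring_1"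
  assumes "\<theta> * 2^m \<in> \<int>" "m \<le> M"
  shows "\<theta> * 2^M \<in> \<int>"
proof -
  have "\<theta> * 2^m * 2^(M - m) \<in> \<int>"
    by (rule Ints_mult[OF assms(1)]) simp
  then show ?thesis
    using assms(2) by (simp add: mult.assoc flip: power_add)
qed

lemma Lambda_dyad_ord_Ints: "q \<in> Lambda \<Longrightarrow> q * 2^dyad_ord q \<in> \<int>"
  unfolding Lambda_def dyad_ord_def by (auto intro: LeastI_ex)

lemma not_Ints_below_dyad_ord: "m < dyad_ord q \<Longrightarrow> q * 2^m \<notin> \<int>"
  unfolding dyad_ord_def by (rule not_less_Least)

lemma Lambda_dyad_ord_eq_0:
  assumes "q \<in> Lambda" "dyad_ord q = 0"
  shows "q = 0"
proof -
  obtain j where "q = of_int j"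
    using Lambda_dyad_ord_Ints[OF assms(1)] assms(2) by (auto elim: Ints_cases)
  then show ?thesis
    using assms(1) by (simp add: Lambda_def)
qed

lemma cis_res_reduce:
  fixes \<theta> :: rat
  assumes "\<theta> * 2^m \<in> \<int>" "m \<le> M"
  shows "cis (2 * pi * (of_rat \<theta> * real (res M x))) = cis (2 * pi * (of_rat \<theta> * real (res m x)))"
proof -
  have e: "res M x = res m x + 2^m * (res M x div 2^m)"
    using res_mod_power[OF assms(2), of x] by simp
  have "2 * pi * (of_rat \<theta> * real (res M x)) =
      2 * pi * (of_rat \<theta> * real (res m x)) + 2 * pi * (of_rat (\<theta> * 2^m) * real (res M x div 2^m))"
    by (subst e) (simp add: algebra_simps of_rat_mult of_rat_power)
  moreover have "of_rat (\<theta> * 2^m) * real (res M x div 2^m) \<in> \<int>"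
    using assms(1) by (intro Ints_mult) (auto simp: of_rat_in_Ints_iff)
  ultimately show ?thesis
    by (simp add: cis_mult[symmetric])
qed

lemma cis_half_integer:
  assumes "2 * t \<in> \<int>" "t \<notin> \<int>"
  shows "cis (2 * pi * t) = -1"
proof -
  obtain j where j: "2 * t = of_int j"
    using assms(1) by (auto elim: Ints_cases)
  have "odd j"
  proof
    assume "even j"
    then obtain i where "j = 2 * i"
      by auto
    then have "t = of_int i"
      using j by simp
    then show False
      using assms(2) by simp
  qed
  then obtain i where "j = 2 * i + 1"
    by (auto elim: oddE)
  then have "2 * pi * t = 2 * pi * of_int i + pi"
    using j by (simp add: algebra_simps)
  then show ?thesis
    by (simp add: cis_mult[symmetric] cis.ctr complex_eq_iff)
qed

lemma sum_antiperiodic_eq_0: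
  fixes f :: "nat \<Rightarrow> 'a::ab_group_add"
  assumes "\<And>k. f (k + N) = - f k"
  shows "(\<Sum>k<2 * N. f k) = 0"
proof -
  have "(\<Sum>k<2 * N. f k) = (\<Sum>k<N. f k) + (\<Sum>k\<in>{N..<N + N}. f k)"
    by (simp add: mult_2 lessThan_atLeast0 sum.atLeastLessThan_concat)
  also have "(\<Sum>k\<in>{N..<N + N}. f k) = (\<Sum>k<N. f (k + N))"
    by (simp add: lessThan_atLeast0 sum.shift_bounds_nat_ivl[of f 0 N N, simplified])
  finally show ?thesis
    by (simp add: assms sum_negf)
qed

lemma integral_cis_res_times_cylinder:
  fixes \<theta> :: rat and F :: "nat \<Rightarrow> complex"
  assumes "\<theta> * 2^M \<in> \<int>" "\<theta> * 2^n \<notin> \<int>"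
  shows "(\<integral>x. cis (2 * pi * (of_rat \<theta> * real (res M x))) * F (res n x) \<partial>haar) = 0"
proof -
  define m where "m = (LEAST m. \<theta> * 2^m \<in> \<int>)"
  have m_Ints: "\<theta> * 2^m \<in> \<int>" and "m \<le> M"
    unfolding m_def using assms(1) by (auto intro: LeastI Least_le)
  have "n < m"
    using Ints_mult_power_mono[OF m_Ints] assms(2) by (meson not_less)
  then obtain k where m: "m = Suc k" and "n \<le> k"
    by (cases m) auto
  have k_not_Ints: "\<theta> * 2^k \<notin> \<int>"
    using not_less_Least[of k "\<lambda>m. \<theta> * 2^m \<in> \<int>"] m by (simp add: m_def)
  \<comment> \<open>The character has period \<open>2^(k+1)\<close> and changes sign under translation by \<open>2^k\<close>,
    while the cylinder factor has period \<open>2^n\<close> dividing \<open>2^k\<close>.\<close>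
  define \<Phi> where "\<Phi> j = cis (2 * pi * (of_rat \<theta> * real j)) * F (j mod 2^n)" for j
  have "2 * (of_rat \<theta> * 2^k) = (of_rat (\<theta> * 2^m) :: real)"
    and "of_rat \<theta> * 2^k = (of_rat (\<theta> * 2^k) :: real)"
    by (simp_all add: m of_rat_mult of_rat_power)
  then have half: "cis (2 * pi * (of_rat \<theta> * 2^k)) = -1"
    using m_Ints k_not_Ints by (intro cis_half_integer) (simp_all only: of_rat_in_Ints_iff not_False_eq_True)
  have "(j + 2^k) mod 2^n = j mod (2::nat)^n" for j
    using \<open>n \<le> k\<close> by (simp add: le_imp_power_dvd mod_add_right_eq[symmetric] flip: dvd_eq_mod_eq_0)
  then have "\<Phi> (j + 2^k) = - \<Phi> j" for j
    using half by (simp add: \<Phi>_def distrib_left distrib_right cis_mult[symmetric])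
  then have "(\<Sum>j<2^m. \<Phi> j) = 0"
    using sum_antiperiodic_eq_0[of \<Phi> "2^k"] m by simp
  moreover have "cis (2 * pi * (of_rat \<theta> * real (res M x))) * F (res n x) = \<Phi> (res m x)" for x
    using cis_res_reduce[OF m_Ints \<open>m \<le> M\<close>] res_mod_power[of n m x] \<open>n < m\<close> by (simp add: \<Phi>_def)
  ultimately show ?thesis
    by (simp add: integral_cylinder)
qed

lemma chr_eq_cis_res:
  assumes "q \<in> Lambda" "dyad_ord q \<le> M"
  shows "chr q x = cis (2 * pi * (of_rat (- q) * real (res M x)))"
proof -
  have "- q * 2^dyad_ord q \<in> \<int>"
    using Lambda_dyad_ord_Ints[OF assms(1)] by (metis Ints_minus minus_mult_left)
  from cis_res_reduce[OF this assms(2)] show ?thesis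
    by (simp add: chr_def of_rat_minus)
qed

lemma measurable_chr [measurable]: "chr q \<in> borel_measurable haar"
  unfolding chr_def by measurable

lemma norm_chr [simp]: "cmod (chr q x) = 1"
  by (simp add: chr_def)

lemma integral_chr_times_cylinder:
  fixes F :: "nat \<Rightarrow> complex"
  assumes "q \<in> Lambda" "n < dyad_ord q"
  shows "(\<integral>x. chr q x * F (res n x) \<partial>haar) = 0"
proof -
  have "- q * 2^dyad_ord q \<in> \<int>" "- q * 2^n \<notin> \<int>"
    using Lambda_dyad_ord_Ints[OF assms(1)] not_Ints_below_dyad_ord[OF assms(2)]
    by (metis Ints_minus minus_mult_left minus_minus)+
  then show ?thesis
    using chr_eq_cis_res[OF assms(1) order_refl] integral_cis_res_times_cylinder by simp
qed

lemma integral_cnj_chr_times_chr: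
  assumes "q \<in> Lambda" "q' \<in> Lambda"
  shows "(\<integral>x. cnj (chr q x) * chr q' x \<partial>haar) = (if q = q' then 1 else 0)"
proof (cases "q = q'")
  case True
  then show ?thesis
    using haar.prob_space by (simp add: mult.commute flip: complex_norm_square)
next
  case False
  define M where "M = max (dyad_ord q) (dyad_ord q')"
  have "cnj (chr q x) * chr q' x = cis (2 * pi * (of_rat (q - q') * real (res M x))) * 1" for x
    using chr_eq_cis_res[OF assms(1), of M] chr_eq_cis_res[OF assms(2), of M]
    by (simp add: M_def cis_cnj cis_mult of_rat_diff of_rat_minus algebra_simps)
  moreover have "(q - q') * 2^M \<in> \<int>"
    using Ints_mult_power_mono[OF Lambda_dyad_ord_Ints[OF assms(1)], of M]
      Ints_mult_power_mono[OF Lambda_dyad_ord_Ints[OF assms(2)], of M]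
    by (simp add: M_def left_diff_distrib Ints_diff)
  moreover have "(q - q') * 2^0 \<notin> \<int>"
  proof
    assume "(q - q') * 2^0 \<in> \<int>"
    then obtain j where "q - q' = of_int j"
      by (auto elim: Ints_cases)
    moreover have "of_int (-1) < q - q'" "q - q' < of_int 1"
      using assms by (auto simp: Lambda_def)
    ultimately have "q - q' = of_int j" "-1 < j" "j < 1"
      by (simp_all only: of_int_less_iff)
    then show False
      using False by simp
  qed
  ultimately show ?thesis
    using False integral_cis_res_times_cylinder[where F = "\<lambda>_. 1" and n = 0] by simp
qed

section \<open>Bessel and Cauchy-Schwarz inequalities\<close>

context finite_measure
begin

lemma integral_norm_sum_orthonormal_sq:
  fixes e :: "'i \<Rightarrow> 'a \<Rightarrow> complex" and a :: "'i \<Rightarrow> complex"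
  assumes "finite I"
    and e_meas: "\<And>i. i \<in> I \<Longrightarrow> e i \<in> borel_measurable M"
    and e_bound: "\<And>i x. i \<in> I \<Longrightarrow> cmod (e i x) \<le> 1"
    and orth: "\<And>i j. i \<in> I \<Longrightarrow> j \<in> I \<Longrightarrow> (\<integral>x. e i x * cnj (e j x) \<partial>M) = (if i = j then 1 else 0)"
  shows "(\<integral>x. (cmod (\<Sum>i\<in>I. a i * e i x))\<^sup>2 \<partial>M) = (\<Sum>i\<in>I. (cmod (a i))\<^sup>2)"
proof -
  have int: "integrable M (\<lambda>x. e i x * cnj (e j x))" if "i \<in> I" "j \<in> I" for i j
  proof (rule integrable_const_bound[where B = 1])
    show "AE x in M. norm (e i x * cnj (e j x)) \<le> 1"
      using that e_bound by (simp add: norm_mult mult_le_one)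
    show "(\<lambda>x. e i x * cnj (e j x)) \<in> borel_measurable M"
      using that by (intro borel_measurable_times borel_measurable_continuous_on[OF continuous_on_cnj]
          continuous_on_id e_meas)
  qed
  have "complex_of_real ((cmod (\<Sum>i\<in>I. a i * e i x))\<^sup>2) =
      (\<Sum>i\<in>I. \<Sum>j\<in>I. a i * cnj (a j) * (e i x * cnj (e j x)))" for x
    by (subst complex_norm_square) (simp add: sum_product algebra_simps)
  then have "complex_of_real (\<integral>x. (cmod (\<Sum>i\<in>I. a i * e i x))\<^sup>2 \<partial>M) =
      (\<Sum>i\<in>I. \<Sum>j\<in>I. a i * cnj (a j) * (\<integral>x. e i x * cnj (e j x) \<partial>M))"
    using int by (simp add: integral_mult_right_zero flip: integral_complex_of_real)
  also have "\<dots> = (\<Sum>i\<in>I. \<Sum>j\<in>I. if i = j then a i * cnj (a j) else 0)"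
    by (intro sum.cong refl) (simp add: orth)
  also have "\<dots> = complex_of_real (\<Sum>i\<in>I. (cmod (a i))\<^sup>2)"
    using \<open>finite I\<close> by (simp add: sum.delta flip: complex_norm_square)
  finally show ?thesis
    by (simp only: of_real_eq_iff)
qed

lemma integrable_bounded_times:
  fixes g :: "'a \<Rightarrow> complex" and h :: "'a \<Rightarrow> real"
  assumes "integrable M h" "g \<in> borel_measurable M" "\<And>x. cmod (g x) \<le> 1"
  shows "integrable M (\<lambda>x. g x * h x)"
proof (rule Bochner_Integration.integrable_bound[OF assms(1)])
  show "(\<lambda>x. g x * complex_of_real (h x)) \<in> borel_measurable M"
    using assms(1,2) by (intro borel_measurable_times measurable_compose[OF _ borel_measurable_of_real]) auto
  show "AE x in M. norm (g x * complex_of_real (h x)) \<le> norm (h x)"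
    using assms(3) by (simp add: norm_mult mult_left_le_one_le)
qed

lemma bessel_inequality:
  fixes e :: "'i \<Rightarrow> 'a \<Rightarrow> complex" and h :: "'a \<Rightarrow> real"
  assumes "finite I"
    and e_meas: "\<And>i. i \<in> I \<Longrightarrow> e i \<in> borel_measurable M"
    and e_bound: "\<And>i x. i \<in> I \<Longrightarrow> cmod (e i x) \<le> 1"
    and orth: "\<And>i j. i \<in> I \<Longrightarrow> j \<in> I \<Longrightarrow> (\<integral>x. e i x * cnj (e j x) \<partial>M) = (if i = j then 1 else 0)"
    and h_meas: "h \<in> borel_measurable M" and h_sq: "integrable M (\<lambda>x. (h x)\<^sup>2)"
  shows "(\<Sum>i\<in>I. (cmod (\<integral>x. cnj (e i x) * h x \<partial>M))\<^sup>2) \<le> (\<integral>x. (h x)\<^sup>2 \<partial>M)"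
proof -
  define c where "c i = (\<integral>x. cnj (e i x) * h x \<partial>M)" for i
  define u where "u x = (\<Sum>i\<in>I. c i * e i x)" for x
  have coeff_int: "integrable M (\<lambda>x. cnj (e i x) * h x)" if "i \<in> I" for i
    using that e_meas e_bound square_integrable_imp_integrable[OF h_meas h_sq]
    by (intro integrable_bounded_times borel_measurable_continuous_on[OF continuous_on_cnj]) auto
  have u_sq: "integrable M (\<lambda>x. (cmod (u x))\<^sup>2)"
  proof (rule integrable_const_bound[where B = "(\<Sum>i\<in>I. cmod (c i))\<^sup>2"])
    have "cmod (u x) \<le> (\<Sum>i\<in>I. cmod (c i))" for x
      unfolding u_def using e_bound
      by (intro order_trans[OF norm_sum] sum_mono) (simp add: norm_mult mult_left_le)
    then show "AE x in M. norm ((cmod (u x))\<^sup>2) \<le> (\<Sum>i\<in>I. cmod (c i))\<^sup>2"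
      by (simp add: power_mono)
    show "(\<lambda>x. (cmod (u x))\<^sup>2) \<in> borel_measurable M"
      unfolding u_def using e_meas by (intro borel_measurable_power borel_measurable_norm
          borel_measurable_sum borel_measurable_times) auto
  qed
  have expand: "cnj (u x) * h x = (\<Sum>i\<in>I. cnj (c i) * (cnj (e i x) * h x))" for x
    by (simp add: u_def sum_distrib_left sum_distrib_right algebra_simps)
  have cross_int: "integrable M (\<lambda>x. cnj (u x) * h x)"
    unfolding expand using coeff_int by auto
  have "(\<integral>x. cnj (u x) * h x \<partial>M) = (\<Sum>i\<in>I. cnj (c i) * c i)"
    unfolding expand using coeff_int by (simp add: c_def)
  then have cross: "(\<integral>x. h x * Re (u x) \<partial>M) = (\<Sum>i\<in>I. (cmod (c i))\<^sup>2)"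
    using arg_cong[of _ _ Re] integral_Re[OF cross_int]
    by (simp add: mult.commute flip: complex_norm_square)
  have re_cross_int: "integrable M (\<lambda>x. h x * Re (u x))"
    using integrable_Re[OF cross_int] by (simp add: mult.commute)
  have pointwise: "(cmod (h x - u x))\<^sup>2 = (h x)\<^sup>2 - 2 * (h x * Re (u x)) + (cmod (u x))\<^sup>2" for x
    unfolding cmod_power2 by (simp add: power2_eq_square algebra_simps)
  have "0 \<le> (\<integral>x. (cmod (h x - u x))\<^sup>2 \<partial>M)"
    by simp
  also have "\<dots> = (\<integral>x. (h x)\<^sup>2 \<partial>M) - 2 * (\<integral>x. h x * Re (u x) \<partial>M) + (\<integral>x. (cmod (u x))\<^sup>2 \<partial>M)"
    unfolding pointwise using h_sq u_sq re_cross_int by simp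
  also have "\<dots> = (\<integral>x. (h x)\<^sup>2 \<partial>M) - (\<Sum>i\<in>I. (cmod (c i))\<^sup>2)"
    using integral_norm_sum_orthonormal_sq[OF \<open>finite I\<close> e_meas e_bound orth, of c] cross
    by (simp add: u_def)
  finally show ?thesis
    by (simp add: c_def)
qed

end

lemma bessel_inequality_fourier:
  assumes "in_L2 h" "finite F" "F \<subseteq> Lambda"
  shows "(\<Sum>q\<in>F. (cmod (fourier h q))\<^sup>2) \<le> (\<integral>x. (h x)\<^sup>2 \<partial>haar)"
  unfolding fourier_def
proof (rule haar.bessel_inequality[where e = "\<lambda>q x. cnj (chr q x)", simplified, OF \<open>finite F\<close>])
  show "(\<integral>x. cnj (chr q x) * chr q' x \<partial>haar) = (if q = q' then 1 else 0)"
    if "q \<in> F" "q' \<in> F" for q q'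
    using that assms(3) integral_cnj_chr_times_chr[of q q'] by (simp add: subset_iff)
qed (use assms(1) in \<open>auto simp: in_L2_def intro: borel_measurable_continuous_on[OF continuous_on_cnj]\<close>)

lemma Cauchy_Schwarz_suminf:
  fixes a b e :: "nat \<Rightarrow> real"
  assumes a: "summable a" "\<And>j. 0 \<le> a j" and b: "summable b" "\<And>j. 0 \<le> b j"
    and e_le: "\<And>j. (e j)\<^sup>2 \<le> a j * b j"
  shows "summable e" and "(suminf e)\<^sup>2 \<le> suminf a * suminf b"
proof -
  have e_le_sqrt: "\<bar>e j\<bar> \<le> sqrt (a j) * sqrt (b j)" for j
    using real_sqrt_le_mono[OF e_le[of j]] by (simp add: real_sqrt_mult)
  have "\<bar>e j\<bar> \<le> (a j + b j) / 2" for j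
    using e_le_sqrt[of j] arith_geo_mean_sqrt[OF a(2) b(2), of j j] by (simp add: real_sqrt_mult)
  then show e_summable: "summable e"
    by (intro summable_comparison_test[OF _ summable_divide[OF summable_add[OF a(1) b(1)], of 2]]) auto
  have partial: "(\<Sum>j<N. e j)\<^sup>2 \<le> suminf a * suminf b" for N
  proof -
    have "\<bar>\<Sum>j<N. e j\<bar> \<le> (\<Sum>j<N. sqrt (a j) * sqrt (b j))"
      using e_le_sqrt by (intro order_trans[OF sum_abs] sum_mono)
    then have "(\<Sum>j<N. e j)\<^sup>2 \<le> (\<Sum>j<N. sqrt (a j) * sqrt (b j))\<^sup>2"
      by (metis abs_ge_zero power2_abs power_mono)
    also have "\<dots> \<le> (\<Sum>j<N. (sqrt (a j))\<^sup>2) * (\<Sum>j<N. (sqrt (b j))\<^sup>2)"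
      by (rule Cauchy_Schwarz_ineq_sum)
    also have "\<dots> = (\<Sum>j<N. a j) * (\<Sum>j<N. b j)"
      using a(2) b(2) by simp
    also have "\<dots> \<le> suminf a * suminf b"
      by (intro mult_mono sum_le_suminf a b suminf_nonneg sum_nonneg) auto
    finally show ?thesis .
  qed
  show "(suminf e)\<^sup>2 \<le> suminf a * suminf b"
    by (rule LIMSEQ_le_const2[OF tendsto_power[OF summable_LIMSEQ[OF e_summable]]]) (use partial in auto)
qed

locale resistive_tree =
  fixes r :: "nat \<Rightarrow> nat \<Rightarrow> real" and \<alpha> :: real
  assumes r_pos: "\<And>n k. n \<ge> 1 \<Longrightarrow> k < 2^n \<Longrightarrow> r n k > 0"
    and alpha: "1 < \<alpha>" "\<alpha> < 2"
    and r_bound: "\<And>n k. n \<ge> 1 \<Longrightarrow> k < 2^n \<Longrightarrow> r n k \<le> \<alpha> ^ n"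
begin

definition \<rho> :: real where "\<rho> = \<alpha> / 2"

definition \<sigma> :: real where "\<sigma> = sqrt \<rho>"

abbreviation sobolev_exponent :: real where "sobolev_exponent \<equiv> (1 - log 2 \<alpha>) / 2"

definition trace_const :: real where
  "trace_const = sqrt (2 + 2 / (1 - \<sigma>) + 1 / (\<rho> * (1 - \<sigma>)\<^sup>2))"

lemma rho_pos: "0 < \<rho>" and rho_less_1: "\<rho> < 1"
  and sigma_pos: "0 < \<sigma>" and sigma_less_1: "\<sigma> < 1"
  using alpha by (auto simp: \<rho>_def \<sigma>_def)

lemma sigma_power_square: "\<sigma>^n * \<sigma>^n = \<rho>^n"
  using rho_pos by (simp add: \<sigma>_def flip: power_mult_distrib)

lemma Hs_factor_le:
  assumes "dyad_ord q = Suc n"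
  shows "(1 + abs2 q) powr (2 * sobolev_exponent) \<le> (1 / \<rho>) ^ Suc (Suc n)"
proof -
  have "q \<noteq> 0"
    using assms by (auto simp: dyad_ord_def)
  moreover have "2 * sobolev_exponent = 1 - log 2 \<alpha>"
    by simp
  ultimately have "(1 + abs2 q) powr (2 * sobolev_exponent) = (1 + 2 ^ Suc n) powr (1 - log 2 \<alpha>)"
    using assms by (simp only: abs2_def if_False)
  also have "\<dots> \<le> (2 ^ Suc (Suc n)) powr (1 - log 2 \<alpha>)"
    using alpha one_le_power[of "2::real" "Suc n"] by (intro powr_mono2) auto
  also have "\<dots> = (2 powr (1 - log 2 \<alpha>)) ^ Suc (Suc n)"
    by (simp add: powr_realpow[symmetric] powr_powr powr_power mult.commute del: power_Suc)
  also have "2 powr (1 - log 2 \<alpha>) = 1 / \<rho>"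
    using alpha by (simp add: powr_diff \<rho>_def)
  finally show ?thesis .
qed

lemma level_bounds_le_trace_const_sq:
  assumes "0 \<le> a" "0 \<le> E"
  shows "2 * a + 2 * (E / (1 - \<sigma>)) + E / (1 - \<sigma>) / (\<rho> * (1 - \<sigma>)) \<le> trace_const\<^sup>2 * (a + E)"
proof -
  define u where "u = 1 / (1 - \<sigma>)"
  define v where "v = 1 / (\<rho> * (1 - \<sigma>)\<^sup>2)"
  have "0 \<le> u" "0 \<le> v"
    using rho_pos sigma_less_1 by (simp_all add: u_def v_def)
  then have "trace_const\<^sup>2 = 2 + 2 * u + v"
    by (simp add: trace_const_def u_def v_def)
  then have "trace_const\<^sup>2 * (a + E) = 2 * a + 2 * (E * u) + E * v + (2 * E + 2 * (u * a) + v * a)"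
    by (simp add: algebra_simps)
  moreover have "E / (1 - \<sigma>) = E * u" "E / (1 - \<sigma>) / (\<rho> * (1 - \<sigma>)) = E * v"
    by (simp_all add: u_def v_def power2_eq_square)
  moreover have "0 \<le> 2 * E + 2 * (u * a) + v * a"
    using assms \<open>0 \<le> u\<close> \<open>0 \<le> v\<close> by simp
  ultimately show ?thesis
    by linarith
qed

end

section \<open>The trace of a finite-energy function\<close>

locale H1_function = resistive_tree +
  fixes p :: "nat \<Rightarrow> nat \<Rightarrow> real"
  assumes in_H1: "in_H1 r p"
begin

abbreviation energy :: "nat \<Rightarrow> real" where "energy \<equiv> H1_semi_sq r p"

definition increment :: "nat \<Rightarrow> Z2 \<Rightarrow> real" where
  "increment n x = ptilde p (Suc n) x - ptilde p n x"

text \<open>Where the series diverges (a null set, see below), \<open>suminf\<close> returns an unspecified value.\<close>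

definition trace :: "Z2 \<Rightarrow> real" where
  "trace x = p 0 0 + (\<Sum>j. increment j x)"

definition tail_energy :: "nat \<Rightarrow> real" where
  "tail_energy n = (\<Sum>j. \<sigma>^j * energy (j + n))"

lemma energy_nonneg: "0 \<le> energy n"
  unfolding H1_semi_sq_def by (intro sum_nonneg divide_nonneg_pos) (auto intro!: r_pos)

lemma summable_energy: "summable energy"
  using in_H1 by (simp add: in_H1_def)

lemma total_energy_nonneg: "0 \<le> (\<Sum>n. energy n)"
  by (intro suminf_nonneg summable_energy energy_nonneg)

lemma ptilde_eq_sum_increment: "ptilde p n x = p 0 0 + (\<Sum>j<n. increment j x)"
  by (induction n) (auto simp: ptilde_def increment_def)

lemma increment_eq_cylinder:
  "increment n x = (\<lambda>k. p (Suc n) k - p n (k mod 2^n)) (res (Suc n) x)"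
  using res_mod_power[of n "Suc n" x] by (simp add: increment_def ptilde_def)

lemma measurable_increment [measurable]: "increment n \<in> borel_measurable haar"
  unfolding increment_eq_cylinder[abs_def] by measurable

lemma measurable_ptilde [measurable]: "ptilde p n \<in> borel_measurable haar"
  unfolding ptilde_def[abs_def] by measurable

lemma integrable_ptilde: "integrable haar (ptilde p n)"
  unfolding ptilde_def[abs_def] by (rule integrable_cylinder)

lemma integral_increment_sq_le: "(\<integral>x. (increment n x)\<^sup>2 \<partial>haar) \<le> \<rho>^Suc n * energy n"
proof -
  let ?D = "\<lambda>k. p (Suc n) k - p n (k mod 2^n)"
  have "(\<integral>x. (increment n x)\<^sup>2 \<partial>haar) = (\<Sum>k<2^Suc n. (?D k)\<^sup>2) / 2^Suc n"
    using integral_cylinder[of "\<lambda>k. (?D k)\<^sup>2" "Suc n"] by (simp add: increment_eq_cylinder)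
  also have "\<dots> \<le> (\<Sum>k<2^Suc n. \<alpha>^Suc n * ((?D k)\<^sup>2 / r (Suc n) k)) / 2^Suc n"
  proof (intro divide_right_mono sum_mono)
    fix k :: nat assume "k \<in> {..<2^Suc n}"
    then have "0 < r (Suc n) k" "r (Suc n) k \<le> \<alpha>^Suc n"
      using r_pos[of "Suc n" k] r_bound[of "Suc n" k] by simp_all
    then show "(?D k)\<^sup>2 \<le> \<alpha>^Suc n * ((?D k)\<^sup>2 / r (Suc n) k)"
      by (simp add: field_simps mult_right_mono del: power_Suc)
  qed simp
  also have "\<dots> = \<alpha>^Suc n * energy n / 2^Suc n"
    by (simp only: H1_semi_sq_def sum_distrib_left)
  also have "\<dots> = \<rho>^Suc n * energy n"
    by (simp add: \<rho>_def power_divide)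
  finally show ?thesis .
qed

text \<open>The weights \<open>\<sigma>^(n+1)\<close> split \<open>\<rho>^(n+1) = \<sigma>^(n+1) \<sigma>^(n+1)\<close> evenly: the weighted squared
  increments are still summable almost everywhere, and the weights themselves are summable,
  as the Cauchy-Schwarz estimate of the tails requires.\<close>

definition weighted_increment_sq :: "nat \<Rightarrow> Z2 \<Rightarrow> real" where
  "weighted_increment_sq n x = (increment n x)\<^sup>2 / \<sigma>^Suc n"

lemma weighted_increment_sq_nonneg: "0 \<le> weighted_increment_sq n x"
  using sigma_pos by (simp add: weighted_increment_sq_def)

lemma measurable_weighted_increment_sq [measurable]: "weighted_increment_sq n \<in> borel_measurable haar"
  unfolding weighted_increment_sq_def[abs_def] by measurable

lemma nn_integral_weighted_increment_sq_le:
  "(\<integral>\<^sup>+x. weighted_increment_sq n x \<partial>haar) \<le> ennreal (\<sigma>^Suc n * energy n)"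
proof -
  have "(\<integral>\<^sup>+x. weighted_increment_sq n x \<partial>haar) = ennreal (\<integral>x. (increment n x)\<^sup>2 \<partial>haar / \<sigma>^Suc n)"
    unfolding weighted_increment_sq_def increment_eq_cylinder
    by (subst nn_integral_eq_integral) (use sigma_pos in auto)
  also have "\<dots> \<le> ennreal (\<rho>^Suc n * energy n / \<sigma>^Suc n)"
    using sigma_pos by (intro ennreal_leI divide_right_mono integral_increment_sq_le) auto
  also have "\<rho>^Suc n * energy n / \<sigma>^Suc n = \<sigma>^Suc n * energy n"
    by (simp only: flip: sigma_power_square) (use sigma_pos in simp)
  finally show ?thesis .
qed

lemma summable_tail_energy: "summable (\<lambda>j. \<sigma>^j * energy (j + n))"
proof (rule summable_comparison_test[OF _ summable_ignore_initial_segment[OF summable_energy, of n]])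
  have "\<sigma>^j \<le> 1" for j
    using sigma_pos sigma_less_1 by (intro power_le_one) auto
  then show "\<exists>N. \<forall>j\<ge>N. norm (\<sigma>^j * energy (j + n)) \<le> energy (j + n)"
    using energy_nonneg sigma_pos by (auto simp: abs_mult intro!: mult_left_le_one_le)
qed

lemma tail_energy_nonneg: "0 \<le> tail_energy n"
  unfolding tail_energy_def using summable_tail_energy energy_nonneg sigma_pos by (intro suminf_nonneg) auto

lemma nn_integral_tail_weighted_increment_sq_le:
  "(\<integral>\<^sup>+x. (\<Sum>j. ennreal (weighted_increment_sq (j + n) x)) \<partial>haar) \<le> ennreal (\<sigma>^Suc n * tail_energy n)"
proof -
  have weights: "(\<lambda>j. \<sigma>^Suc (j + n) * energy (j + n)) = (\<lambda>j. \<sigma>^Suc n * (\<sigma>^j * energy (j + n)))"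
    by (simp add: power_add mult_ac)
  have "(\<integral>\<^sup>+x. (\<Sum>j. ennreal (weighted_increment_sq (j + n) x)) \<partial>haar) =
      (\<Sum>j. \<integral>\<^sup>+x. weighted_increment_sq (j + n) x \<partial>haar)"
    by (rule nn_integral_suminf) measurable
  also have "\<dots> \<le> (\<Sum>j. ennreal (\<sigma>^Suc (j + n) * energy (j + n)))"
    by (intro suminf_le nn_integral_weighted_increment_sq_le summableI)
  also have "\<dots> = ennreal (\<Sum>j. \<sigma>^Suc (j + n) * energy (j + n))"
  proof (rule suminf_ennreal2)
    show "summable (\<lambda>j. \<sigma>^Suc (j + n) * energy (j + n))"
      unfolding weights by (intro summable_mult summable_tail_energy)
  qed (use energy_nonneg sigma_pos in auto)
  also have "(\<Sum>j. \<sigma>^Suc (j + n) * energy (j + n)) = \<sigma>^Suc n * tail_energy n"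
    unfolding weights tail_energy_def by (rule suminf_mult[OF summable_tail_energy])
  finally show ?thesis .
qed

lemma AE_summable_weighted_increment_sq: "AE x in haar. summable (\<lambda>j. weighted_increment_sq j x)"
proof -
  have "(\<integral>\<^sup>+x. (\<Sum>j. ennreal (weighted_increment_sq j x)) \<partial>haar) \<noteq> \<infinity>"
    using nn_integral_tail_weighted_increment_sq_le[of 0] by (auto simp: top_unique)
  then have "AE x in haar. (\<Sum>j. ennreal (weighted_increment_sq j x)) \<noteq> \<infinity>"
    by (intro nn_integral_PInf_AE) measurable
  then show ?thesis
    by eventually_elim (auto intro: summable_suminf_not_top weighted_increment_sq_nonneg)
qed

lemma geometric_tail: "(\<Sum>j. \<sigma>^Suc (j + n)) = \<sigma>^Suc n / (1 - \<sigma>)" "summable (\<lambda>j. \<sigma>^Suc (j + n))"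
proof -
  have "(\<lambda>j. \<sigma>^Suc (j + n)) = (\<lambda>j. \<sigma>^Suc n * \<sigma>^j)"
    by (simp add: power_add mult_ac)
  moreover have "summable (\<lambda>j. \<sigma>^j)"
    using sigma_pos sigma_less_1 by (intro summable_geometric) simp
  ultimately show "(\<Sum>j. \<sigma>^Suc (j + n)) = \<sigma>^Suc n / (1 - \<sigma>)" "summable (\<lambda>j. \<sigma>^Suc (j + n))"
    using suminf_geometric[of \<sigma>] sigma_pos sigma_less_1 by (simp_all add: suminf_mult summable_mult)
qed

lemma trace_minus_ptilde_sq_le:
  assumes "summable (\<lambda>j. weighted_increment_sq j x)"
  shows "summable (\<lambda>j. increment j x)"
    and "(trace x - ptilde p n x)\<^sup>2 \<le> \<sigma>^Suc n / (1 - \<sigma>) * (\<Sum>j. weighted_increment_sq (j + n) x)"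
proof -
  have incr_le: "(increment (j + n) x)\<^sup>2 \<le> \<sigma>^Suc (j + n) * weighted_increment_sq (j + n) x" for j
    using sigma_pos by (simp add: weighted_increment_sq_def)
  have weight_nonneg: "0 \<le> \<sigma>^Suc (j + n)" for j
    using sigma_pos by simp
  note CS = Cauchy_Schwarz_suminf[OF geometric_tail(2) weight_nonneg summable_ignore_initial_segment[OF assms]
      weighted_increment_sq_nonneg incr_le]
  then show summable: "summable (\<lambda>j. increment j x)"
    using sigma_pos by (simp add: summable_iff_shift[of "\<lambda>j. increment j x" n])
  have "trace x - ptilde p n x = (\<Sum>j. increment (j + n) x)"
    unfolding trace_def ptilde_eq_sum_increment using suminf_split_initial_segment[OF summable, of n] by simp
  then show "(trace x - ptilde p n x)\<^sup>2 \<le> \<sigma>^Suc n / (1 - \<sigma>) * (\<Sum>j. weighted_increment_sq (j + n) x)"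
    using CS(2) by (simp only: geometric_tail(1))
qed

lemma measurable_trace [measurable]: "trace \<in> borel_measurable haar"
  unfolding trace_def[abs_def] by measurable

lemma nn_integral_trace_minus_ptilde_sq_le:
  "(\<integral>\<^sup>+x. (trace x - ptilde p n x)\<^sup>2 \<partial>haar) \<le> ennreal (\<rho>^Suc n * tail_energy n / (1 - \<sigma>))"
proof -
  define c where "c = \<sigma>^Suc n / (1 - \<sigma>)"
  have "c \<ge> 0"
    using sigma_pos sigma_less_1 by (simp add: c_def)
  have "(\<integral>\<^sup>+x. (trace x - ptilde p n x)\<^sup>2 \<partial>haar) \<le>
      (\<integral>\<^sup>+x. ennreal c * (\<Sum>j. ennreal (weighted_increment_sq (j + n) x)) \<partial>haar)"
    using AE_summable_weighted_increment_sq
  proof (intro nn_integral_mono_AE, eventually_elim)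
    fix x assume summable: "summable (\<lambda>j. weighted_increment_sq j x)"
    then have tail_summable: "summable (\<lambda>j. weighted_increment_sq (j + n) x)"
      by (rule summable_ignore_initial_segment)
    have "ennreal ((trace x - ptilde p n x)\<^sup>2) \<le> ennreal (c * (\<Sum>j. weighted_increment_sq (j + n) x))"
      using trace_minus_ptilde_sq_le(2)[OF summable] by (intro ennreal_leI) (simp add: c_def)
    also have "\<dots> = ennreal c * (\<Sum>j. ennreal (weighted_increment_sq (j + n) x))"
      using \<open>c \<ge> 0\<close> tail_summable weighted_increment_sq_nonneg
      by (simp add: ennreal_mult suminf_nonneg suminf_ennreal2)
    finally show "ennreal ((trace x - ptilde p n x)\<^sup>2) \<le>
        ennreal c * (\<Sum>j. ennreal (weighted_increment_sq (j + n) x))" .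
  qed
  also have "\<dots> = ennreal c * (\<integral>\<^sup>+x. (\<Sum>j. ennreal (weighted_increment_sq (j + n) x)) \<partial>haar)"
    by (rule nn_integral_cmult) measurable
  also have "\<dots> \<le> ennreal c * ennreal (\<sigma>^Suc n * tail_energy n)"
    by (intro mult_left_mono nn_integral_tail_weighted_increment_sq_le) simp
  also have "\<dots> = ennreal (c * (\<sigma>^Suc n * tail_energy n))"
    using \<open>c \<ge> 0\<close> sigma_pos tail_energy_nonneg by (simp add: ennreal_mult)
  also have "c * (\<sigma>^Suc n * tail_energy n) = \<rho>^Suc n * tail_energy n / (1 - \<sigma>)"
    unfolding c_def sigma_power_square[symmetric] by (simp del: power_Suc)
  finally show ?thesis .
qed

lemma
  shows integrable_trace_minus_ptilde_sq: "integrable haar (\<lambda>x. (trace x - ptilde p n x)\<^sup>2)"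
    and integral_trace_minus_ptilde_sq_le:
      "(\<integral>x. (trace x - ptilde p n x)\<^sup>2 \<partial>haar) \<le> \<rho>^Suc n * tail_energy n / (1 - \<sigma>)"
proof -
  have bound_nonneg: "0 \<le> \<rho>^Suc n * tail_energy n / (1 - \<sigma>)"
    using rho_pos sigma_less_1 tail_energy_nonneg by simp
  show "integrable haar (\<lambda>x. (trace x - ptilde p n x)\<^sup>2)"
    using nn_integral_trace_minus_ptilde_sq_le[of n]
    by (intro integrableI_nonneg) (auto simp: less_top[symmetric] top_unique)
  show "(\<integral>x. (trace x - ptilde p n x)\<^sup>2 \<partial>haar) \<le> \<rho>^Suc n * tail_energy n / (1 - \<sigma>)"
    using nn_integral_trace_minus_ptilde_sq_le[of n] bound_nonneg
    by (subst integral_eq_nn_integral) (auto intro: enn2real_leI)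
qed

lemma tail_energy_le: "tail_energy n \<le> (\<Sum>j. energy j)"
proof -
  have "tail_energy n \<le> (\<Sum>j. energy (j + n))"
    unfolding tail_energy_def
  proof (rule suminf_le[OF _ summable_tail_energy summable_ignore_initial_segment[OF summable_energy]])
    show "\<sigma>^j * energy (j + n) \<le> energy (j + n)" for j
      using sigma_pos sigma_less_1 energy_nonneg by (intro mult_left_le_one_le power_le_one) auto
  qed
  also have "\<dots> \<le> (\<Sum>j. energy j)"
    using suminf_split_initial_segment[OF summable_energy, of n] energy_nonneg
    by (simp add: sum_nonneg)
  finally show ?thesis .
qed

lemma sum_tail_energy_le: "(\<Sum>n<N. tail_energy n) \<le> (\<Sum>j. energy j) / (1 - \<sigma>)"
proof -
  have "(\<Sum>n<N. tail_energy n) = (\<Sum>j. \<Sum>n<N. \<sigma>^j * energy (j + n))"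
    unfolding tail_energy_def by (rule suminf_sum[symmetric]) (rule summable_tail_energy)
  also have "\<dots> \<le> (\<Sum>j. \<sigma>^j * (\<Sum>j. energy j))"
  proof (rule suminf_le)
    fix j
    have "(\<Sum>n<N. energy (j + n)) = sum energy ((+) j ` {..<N})"
      by (simp add: sum.reindex)
    also have "\<dots> \<le> (\<Sum>j. energy j)"
      by (rule sum_le_suminf[OF summable_energy]) (auto intro: energy_nonneg)
    finally show "(\<Sum>n<N. \<sigma>^j * energy (j + n)) \<le> \<sigma>^j * (\<Sum>j. energy j)"
      using sigma_pos by (simp add: mult_left_mono flip: sum_distrib_left)
  next
    show "summable (\<lambda>j. \<Sum>n<N. \<sigma>^j * energy (j + n))"
      by (intro summable_sum summable_tail_energy)
    show "summable (\<lambda>j. \<sigma>^j * (\<Sum>j. energy j))"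
      using sigma_pos sigma_less_1 by (intro summable_mult2 summable_geometric) simp
  qed
  also have "\<dots> = (\<Sum>j. energy j) / (1 - \<sigma>)"
    using suminf_mult2[OF summable_geometric, of \<sigma>] suminf_geometric[of \<sigma>] sigma_pos sigma_less_1
    by simp
  finally show ?thesis .
qed

lemma in_L2_trace: "in_L2 trace"
  and integral_trace_sq_le: "(\<integral>x. (trace x)\<^sup>2 \<partial>haar) \<le> 2 * (p 0 0)\<^sup>2 + 2 * ((\<Sum>j. energy j) / (1 - \<sigma>))"
proof -
  let ?f = "\<lambda>x. 2 * (trace x - ptilde p 0 x)\<^sup>2 + 2 * (p 0 0)\<^sup>2"
  have f_int: "integrable haar ?f"
    using integrable_trace_minus_ptilde_sq by auto
  have le: "(trace x)\<^sup>2 \<le> ?f x" for x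
    using sum_squares_ge_zero[of "trace x - 2 * p 0 0" 0]
    by (simp add: ptilde_def power2_eq_square algebra_simps)
  have trace_sq_int: "integrable haar (\<lambda>x. (trace x)\<^sup>2)"
    using le by (intro Bochner_Integration.integrable_bound[OF f_int]) auto
  then show "in_L2 trace"
    by (simp add: in_L2_def)
  have "(\<integral>x. (trace x)\<^sup>2 \<partial>haar) \<le> (\<integral>x. ?f x \<partial>haar)"
    by (rule integral_mono[OF trace_sq_int f_int le])
  also have "\<dots> = 2 * (\<integral>x. (trace x - ptilde p 0 x)\<^sup>2 \<partial>haar) + 2 * (p 0 0)\<^sup>2"
    using integrable_trace_minus_ptilde_sq haar.prob_space by simp
  also have "\<dots> \<le> 2 * (\<rho> * tail_energy 0 / (1 - \<sigma>)) + 2 * (p 0 0)\<^sup>2"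
    using integral_trace_minus_ptilde_sq_le[of 0] by simp
  also have "\<rho> * tail_energy 0 / (1 - \<sigma>) \<le> (\<Sum>j. energy j) / (1 - \<sigma>)"
    using rho_pos rho_less_1 sigma_less_1 tail_energy_nonneg tail_energy_le[of 0]
    by (intro divide_right_mono order_trans[OF mult_left_le_one_le]) auto
  finally show "(\<integral>x. (trace x)\<^sup>2 \<partial>haar) \<le> 2 * (p 0 0)\<^sup>2 + 2 * ((\<Sum>j. energy j) / (1 - \<sigma>))"
    by simp
qed

lemma LIMSEQ_ptilde_trace: "(\<lambda>n. \<integral>x. (ptilde p n x - trace x)\<^sup>2 \<partial>haar) \<longlonglongrightarrow> 0"
proof (rule tendsto_sandwich[of "\<lambda>_. 0" _ _ "\<lambda>n. \<rho>^Suc n * (\<Sum>j. energy j) / (1 - \<sigma>)"])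
  show "\<forall>\<^sub>F n in sequentially. (\<integral>x. (ptilde p n x - trace x)\<^sup>2 \<partial>haar) \<le>
      \<rho>^Suc n * (\<Sum>j. energy j) / (1 - \<sigma>)"
  proof (intro always_eventually allI)
    fix n
    have "(\<integral>x. (ptilde p n x - trace x)\<^sup>2 \<partial>haar) = (\<integral>x. (trace x - ptilde p n x)\<^sup>2 \<partial>haar)"
      by (simp add: power2_commute)
    also have "\<dots> \<le> \<rho>^Suc n * tail_energy n / (1 - \<sigma>)"
      by (rule integral_trace_minus_ptilde_sq_le)
    also have "\<dots> \<le> \<rho>^Suc n * (\<Sum>j. energy j) / (1 - \<sigma>)"
      using tail_energy_le[of n] rho_pos sigma_less_1 by (intro divide_right_mono mult_left_mono) auto
    finally show "(\<integral>x. (ptilde p n x - trace x)\<^sup>2 \<partial>haar) \<le> \<rho>^Suc n * (\<Sum>j. energy j) / (1 - \<sigma>)" .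
  qed
  show "(\<lambda>n. \<rho>^Suc n * (\<Sum>j. energy j) / (1 - \<sigma>)) \<longlonglongrightarrow> 0"
    using rho_pos rho_less_1
    by (intro tendsto_divide_zero tendsto_mult_left_zero LIMSEQ_Suc LIMSEQ_power_zero) simp
qed auto

subsection \<open>Sobolev regularity of the trace\<close>

lemma fourier_trace_minus_ptilde:
  assumes "q \<in> Lambda" "n < dyad_ord q"
  shows "fourier (\<lambda>x. trace x - ptilde p n x) q = fourier trace q"
proof -
  have trace_int: "integrable haar trace"
    using in_L2_trace by (auto simp: in_L2_def intro: haar.square_integrable_imp_integrable)
  have "fourier (\<lambda>x. trace x - ptilde p n x) q =
      fourier trace q - (\<integral>x. chr q x * p n (res n x) \<partial>haar)"
    using haar.integrable_bounded_times[OF trace_int, of "chr q"]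
      haar.integrable_bounded_times[OF integrable_ptilde, of "chr q" n]
    by (simp add: fourier_def right_diff_distrib ptilde_def)
  also have "(\<integral>x. chr q x * p n (res n x) \<partial>haar) = 0"
    using integral_chr_times_cylinder[OF assms, of "\<lambda>k. p n k"] by simp
  finally show ?thesis
    by simp
qed

text \<open>On the characters of exact order \<open>2^(n+1)\<close> the trace has the same Fourier coefficients
  as its deviation from \<open>ptilde p n\<close>, whose \<open>L^2\<close> norm decays like \<open>\<rho>^(n+1)\<close>; this
  compensates the Sobolev weight \<open>(1/\<rho>)^(n+2)\<close> of that level.\<close>

lemma sum_Hs_weight_level_le:
  assumes F: "finite F" "F \<subseteq> Lambda" and order: "\<And>q. q \<in> F \<Longrightarrow> dyad_ord q = Suc n"
  shows "sum (Hs_weight sobolev_exponent trace) F \<le> tail_energy n / (\<rho> * (1 - \<sigma>))"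
proof -
  let ?h = "\<lambda>x. trace x - ptilde p n x"
  have "sum (Hs_weight sobolev_exponent trace) F \<le> (\<Sum>q\<in>F. (1 / \<rho>)^Suc (Suc n) * (cmod (fourier trace q))\<^sup>2)"
    unfolding Hs_weight_def using order by (intro sum_mono mult_right_mono Hs_factor_le) auto
  also have "\<dots> = (1 / \<rho>)^Suc (Suc n) * (\<Sum>q\<in>F. (cmod (fourier ?h q))\<^sup>2)"
    using F order by (simp add: sum_distrib_left fourier_trace_minus_ptilde subset_iff)
  also have "\<dots> \<le> (1 / \<rho>)^Suc (Suc n) * (\<integral>x. (?h x)\<^sup>2 \<partial>haar)"
    using rho_pos integrable_trace_minus_ptilde_sq[of n]
    by (intro mult_left_mono bessel_inequality_fourier F) (auto simp: in_L2_def)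
  also have "\<dots> \<le> (1 / \<rho>)^Suc (Suc n) * (\<rho>^Suc n * tail_energy n / (1 - \<sigma>))"
    using rho_pos by (intro mult_left_mono integral_trace_minus_ptilde_sq_le) auto
  also have "\<dots> = tail_energy n / (\<rho> * (1 - \<sigma>))"
    using rho_pos by (simp add: power_one_over field_simps)
  finally show ?thesis .
qed

lemma sum_Hs_weight_level0_le:
  assumes F: "finite F" "F \<subseteq> Lambda" and order: "\<And>q. q \<in> F \<Longrightarrow> dyad_ord q = 0"
  shows "sum (Hs_weight sobolev_exponent trace) F \<le> 2 * (p 0 0)\<^sup>2 + 2 * ((\<Sum>j. energy j) / (1 - \<sigma>))"
proof -
  have "q = 0" if "q \<in> F" for q
    using that F order Lambda_dyad_ord_eq_0 by auto
  then have "sum (Hs_weight sobolev_exponent trace) F = (\<Sum>q\<in>F. (cmod (fourier trace q))\<^sup>2)"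
    by (intro sum.cong) (auto simp: Hs_weight_def abs2_def)
  also have "\<dots> \<le> (\<integral>x. (trace x)\<^sup>2 \<partial>haar)"
    by (rule bessel_inequality_fourier[OF in_L2_trace F])
  also have "\<dots> \<le> 2 * (p 0 0)\<^sup>2 + 2 * ((\<Sum>j. energy j) / (1 - \<sigma>))"
    by (rule integral_trace_sq_le)
  finally show ?thesis .
qed

lemma sum_Hs_weight_le:
  assumes F: "finite F" "F \<subseteq> Lambda"
  shows "sum (Hs_weight sobolev_exponent trace) F \<le> (trace_const * H1_norm r p)\<^sup>2"
proof -
  let ?W = "Hs_weight sobolev_exponent trace"
  define N where "N = Max (insert 0 (dyad_ord ` F))"
  have "dyad_ord q < Suc N" if "q \<in> F" for q
    using F(1) that by (auto simp: N_def less_Suc_eq_le)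
  then have "sum ?W F = (\<Sum>m<Suc N. sum ?W {q \<in> F. dyad_ord q = m})"
    using F(1) by (intro sum.group[symmetric]) auto
  also have "\<dots> = sum ?W {q \<in> F. dyad_ord q = 0} + (\<Sum>n<N. sum ?W {q \<in> F. dyad_ord q = Suc n})"
    by (rule sum.lessThan_Suc_shift)
  also have "\<dots> \<le> 2 * (p 0 0)\<^sup>2 + 2 * ((\<Sum>j. energy j) / (1 - \<sigma>)) + (\<Sum>n<N. tail_energy n) / (\<rho> * (1 - \<sigma>))"
    unfolding sum_divide_distrib
    using F by (intro add_mono sum_mono sum_Hs_weight_level0_le sum_Hs_weight_level_le) auto
  also have "\<dots> \<le> 2 * (p 0 0)\<^sup>2 + 2 * ((\<Sum>j. energy j) / (1 - \<sigma>)) + (\<Sum>j. energy j) / (1 - \<sigma>) / (\<rho> * (1 - \<sigma>))"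
    using rho_pos sigma_less_1 by (intro add_left_mono divide_right_mono sum_tail_energy_le) auto
  also have "\<dots> \<le> trace_const\<^sup>2 * ((p 0 0)\<^sup>2 + (\<Sum>j. energy j))"
    by (rule level_bounds_le_trace_const_sq) (simp_all add: total_energy_nonneg)
  also have "\<dots> = (trace_const * H1_norm r p)\<^sup>2"
    using total_energy_nonneg by (simp add: H1_norm_def power_mult_distrib)
  finally show ?thesis .
qed

lemma trace_in_Hs: "in_Hs sobolev_exponent trace"
  and Hs_norm_trace_le: "Hs_norm sobolev_exponent trace \<le> trace_const * H1_norm r p"
proof -
  let ?W = "Hs_weight sobolev_exponent trace"
  have W_nonneg: "0 \<le> ?W q" for q
    by (simp add: Hs_weight_def)
  have "?W summable_on Lambda"
    using sum_Hs_weight_le W_nonneg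
    by (intro nonneg_bounded_partial_sums_imp_summable_on)
      (auto simp: eventually_finite_subsets_at_top intro!: exI[of _ "{}"])
  then show "in_Hs sobolev_exponent trace"
    using in_L2_trace by (simp add: in_Hs_def)
  have "infsum ?W Lambda \<le> (trace_const * H1_norm r p)\<^sup>2"
    by (rule infsum_le_finite_sums[OF \<open>?W summable_on Lambda\<close> sum_Hs_weight_le])
  then show "Hs_norm sobolev_exponent trace \<le> trace_const * H1_norm r p"
  proof -
    have "0 \<le> trace_const * H1_norm r p"
      using rho_pos sigma_less_1 total_energy_nonneg by (simp add: trace_const_def H1_norm_def)
    then show ?thesis
      unfolding Hs_norm_def
      using real_sqrt_le_mono[OF \<open>infsum ?W Lambda \<le> (trace_const * H1_norm r p)\<^sup>2\<close>] by simp
  qed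
qed

end

theorem theorem3p2:
  fixes r :: "nat \<Rightarrow> nat \<Rightarrow> real" and \<alpha> :: real
  assumes r_pos: "\<And>n k. n \<ge> 1 \<Longrightarrow> k < 2^n \<Longrightarrow> r n k > 0"
    and alpha: "1 < \<alpha>" "\<alpha> < 2"
    and r_bound: "\<And>n k. n \<ge> 1 \<Longrightarrow> k < 2^n \<Longrightarrow> r n k \<le> \<alpha> ^ n"
  shows "\<exists>C. \<forall>p. in_H1 r p \<longrightarrow>
           (\<exists>g. in_L2 g
              \<and> ((\<lambda>n. LINT x|haar. (ptilde p n x - g x)^2) \<longlonglongrightarrow> 0)
              \<and> in_Hs ((1 - log 2 \<alpha>) / 2) g
              \<and> Hs_norm ((1 - log 2 \<alpha>) / 2) g \<le> C * H1_norm r p)"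
proof -
  interpret resistive_tree r \<alpha>
    using r_pos alpha r_bound by unfold_locales
  show ?thesis
  proof (intro exI[of _ trace_const] allI impI)
    fix p assume "in_H1 r p"
    then interpret H1_function r \<alpha> p
      by unfold_locales
    show "\<exists>g. in_L2 g \<and> ((\<lambda>n. LINT x|haar. (ptilde p n x - g x)^2) \<longlonglongrightarrow> 0)
        \<and> in_Hs ((1 - log 2 \<alpha>) / 2) g \<and> Hs_norm ((1 - log 2 \<alpha>) / 2) g \<le> trace_const * H1_norm r p"
      using in_L2_trace LIMSEQ_ptilde_trace trace_in_Hs Hs_norm_trace_le by blast
  qed
qed

end
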